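(* Fix $J\in\mathbb Z_{>0}$, $i_1,j_1,i_2\in\mathbb Z_{\ge0}$ and $j_2\in\{0,\dots,J\}$. Then $$W_J(i_1,j_1;i_2,j_2\mid v,\lambda)=\sum_{k=0}^J W_{j_2}\big(i_1,k;\,i_1+k-j_2,\,j_2\mid v,\,\lambda-2\eta(J-2j_1-j_2+2k)\big)\,W_{J-j_2}\big(i_1+k-j_2,\,j_1-k;\,i_2,\,0\mid v+2\eta j_2,\,\lambda\big),$$ with the conventions that $W_0(i,0;i,0\mid\cdot)=1$, $W_0(i,j;i',j')=0$ if $(j,j')\neq(0,0)$ or $i\ne i'$, and any weight with a negative argument is $0$.
   Context: Fix $\eta,\tau\in\mathbb C$, $\operatorname{Im}\tau>0$. $f(z)$ denotes either $\theta(z)=-\sum_{j\in\mathbb Z}\exp\big(\pi\mathbf i\tau(j+\tfrac12)^2+2\pi\mathbf i(j+\tfrac12)(z+\tfrac12)\big)$ or $\sin(\pi z)$. Unfused weights ($k\ge0$): $W_1(k,0;k,0\mid v,\lambda,\Lambda)=\frac{f(\eta(\Lambda-2k)-v)f(\lambda+2k\eta)}{f(\eta\Lambda-v)f(\lambda)}$, $W_1(k,1;k+1,0\mid\cdot)=\frac{f(v+\lambda+\eta(2k+2-\Lambda))f(2\eta)}{f(\eta\Lambda-v)f(\lambda)}$, $W_1(k,0;k-1,1\mid\cdot)=\frac{f(\lambda-v+\eta(2k-2-\Lambda))f(2\eta(\Lambda+1-k))f(2k\eta)}{f(\eta\Lambda-v)f(\lambda)f(2\eta)}$ ($k\ge1$),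 $W_1(k,1;k,1\mid\cdot)=\frac{f(\eta(2k-\Lambda)-v)f(\lambda+2\eta(k-\Lambda))}{f(\eta\Lambda-v)f(\lambda)}$, and $0$ otherwise. Column weights: for $\mathcal J_1=(j_{1,k})_{k=1}^J,\mathcal J_2=(j_{2,k})_{k=1}^J\in\{0,1\}^J$, $i^{(1)}=i_1$, $i^{(k+1)}=i^{(k)}+j_{1,k}-j_{2,k}$, $\Phi_J=\lambda$, $\Phi_k=\Phi_{k+1}\mp2\eta$ according as $j_{1,k+1}=0$ or $1$; $W_J(i_1,\mathcal J_1;i_2,\mathcal J_2\mid v,\lambda)=\prod_{k=1}^JW_1(i^{(k)},j_{1,k};i^{(k+1)},j_{2,k}\mid v+2\eta(k-1),\Phi_k,\Lambda)$ if all $i^{(k)}\ge0$ and $i^{(J+1)}=i_2$, else $0$. Fused weight: $W_J(i_1,j_1;i_2,j_2\mid v,\lambda)=\sum_{|\mathcal J_1|=j_1}W_J(i_1,\mathcal J_1;i_2,\mathcal K\mid v,\lambda)$ for any $\mathcal K$ with $|\mathcal K|=j_2$ (independent of $\mathcal K$); $\Lambda$ is suppressed. *)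

theory Defs
  imports "HOL-Analysis.Analysis"
begin

definition theta_fn :: "complex \<Rightarrow> complex \<Rightarrow> complex" where
  "theta_fn \<tau> z = - (\<Sum>\<^sub>\<infinity>j\<in>(UNIV::int set).
      exp (pi * \<i> * \<tau> * (of_int j + 1/2)^2 + 2 * pi * \<i> * (of_int j + 1/2) * (z + 1/2)))"

definition sin_fn :: "complex \<Rightarrow> complex" where
  "sin_fn z = sin (of_real pi * z)"

definition W1 :: "(complex \<Rightarrow> complex) \<Rightarrow> complex \<Rightarrow> complex \<Rightarrow>
    int \<Rightarrow> int \<Rightarrow> int \<Rightarrow> int \<Rightarrow> complex \<Rightarrow> complex \<Rightarrow> complex" where
  "W1 f \<eta> \<Lambda> k j1 k' j2 v lam =
    (if k < 0 then 0
     else if j1 = 0 \<and> j2 = 0 \<and> k' = k then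
       f (\<eta> * (\<Lambda> - 2 * of_int k) - v) * f (lam + 2 * of_int k * \<eta>) / (f (\<eta> * \<Lambda> - v) * f lam)
     else if j1 = 1 \<and> j2 = 0 \<and> k' = k + 1 then
       f (v + lam + \<eta> * (2 * of_int k + 2 - \<Lambda>)) * f (2 * \<eta>) / (f (\<eta> * \<Lambda> - v) * f lam)
     else if j1 = 0 \<and> j2 = 1 \<and> k' = k - 1 \<and> k \<ge> 1 then
       f (lam - v + \<eta> * (2 * of_int k - 2 - \<Lambda>)) * f (2 * \<eta> * (\<Lambda> + 1 - of_int k)) * f (2 * of_int k * \<eta>)
         / (f (\<eta> * \<Lambda> - v) * f lam * f (2 * \<eta>))
     else if j1 = 1 \<and> j2 = 1 \<and> k' = k then
       f (\<eta> * (2 * of_int k - \<Lambda>) - v) * f (lam + 2 * \<eta> * (of_int k - \<Lambda>)) / (f (\<eta> * \<Lambda> - v) * f lam)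
     else 0)"

definition bits :: "nat \<Rightarrow> int \<Rightarrow> int list set" where
  "bits n s = {xs. length xs = n \<and> set xs \<subseteq> {0, 1} \<and> sum_list xs = s}"

text \<open>Column weight W_J(i1, J1; i2, K | v, lambda), J = length J1, 0-indexed:
  the m-th vertex (m = 0..J-1, paper index k = m+1) has horizontal entry
  ipos m = i1 + sum_{l<m} (J1!l - K!l), spectral parameter v + 2 eta m and
  dynamical parameter Phi m = lambda - 2 eta sum_{l=m+1}^{J-1} (1 - 2 J1!l).\<close>
definition ipos :: "int \<Rightarrow> int list \<Rightarrow> int list \<Rightarrow> nat \<Rightarrow> int" where
  "ipos i1 J1 K m = i1 + (\<Sum>l<m. J1 ! l - K ! l)"

definition Phi :: "complex \<Rightarrow> int list \<Rightarrow> complex \<Rightarrow> nat \<Rightarrow> complex" where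
  "Phi \<eta> J1 lam m = lam - 2 * \<eta> * of_int (\<Sum>l\<in>{m+1..<length J1}. 1 - 2 * J1 ! l)"

definition Wcol :: "(complex \<Rightarrow> complex) \<Rightarrow> complex \<Rightarrow> complex \<Rightarrow>
    int \<Rightarrow> int list \<Rightarrow> int \<Rightarrow> int list \<Rightarrow> complex \<Rightarrow> complex \<Rightarrow> complex" where
  "Wcol f \<eta> \<Lambda> i1 J1 i2 K v lam =
    (if (\<forall>m\<le>length J1. ipos i1 J1 K m \<ge> 0) \<and> ipos i1 J1 K (length J1) = i2
     then (\<Prod>m<length J1. W1 f \<eta> \<Lambda> (ipos i1 J1 K m) (J1 ! m) (ipos i1 J1 K (Suc m)) (K ! m)
                                (v + 2 * \<eta> * of_nat m) (Phi \<eta> J1 lam m))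
     else 0)"

definition WfusedK :: "(complex \<Rightarrow> complex) \<Rightarrow> complex \<Rightarrow> complex \<Rightarrow> nat \<Rightarrow>
    int \<Rightarrow> int \<Rightarrow> int \<Rightarrow> int list \<Rightarrow> complex \<Rightarrow> complex \<Rightarrow> complex" where
  "WfusedK f \<eta> \<Lambda> J i1 j1 i2 K v lam = (\<Sum>J1\<in>bits J j1. Wcol f \<eta> \<Lambda> i1 J1 i2 K v lam)"

text \<open>Fused weight W_J(i1,j1;i2,j2 | v,lambda): zero when j2 is not in {0..J}
  (negative arguments give zero); otherwise computed with the word K = 1^j2 0^(J-j2).
  (Only the cases j2 = J and j2 = 0, where K is unique, are used in the statement.)\<close>
definition Wfused :: "(complex \<Rightarrow> complex) \<Rightarrow> complex \<Rightarrow> complex \<Rightarrow> nat \<Rightarrow>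
    int \<Rightarrow> int \<Rightarrow> int \<Rightarrow> int \<Rightarrow> complex \<Rightarrow> complex \<Rightarrow> complex" where
  "Wfused f \<eta> \<Lambda> J i1 j1 i2 j2 v lam =
    (if i1 < 0 \<or> j1 < 0 \<or> i2 < 0 \<or> j2 < 0 \<or> j2 > int J then 0
     else WfusedK f \<eta> \<Lambda> J i1 j1 i2 (replicate (nat j2) 1 @ replicate (J - nat j2) 0) v lam)"

end

theory Submission
  imports Defs
begin

text \<open>Expanding the column vertex by vertex, the fused weight computed with a lower word \<open>K\<close> is
  unchanged when two adjacent letters \<open>1 0\<close> of \<open>K\<close> are replaced by \<open>0 1\<close>: expanding the two
  affected vertices, this reduces to three relations between products of two unfused weights.
  Two of them are immediate; after substituting the weights, the third follows from two instances
  of the three-term identity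
  \<open>f(c+w) f(c-w) f(d+z) f(d-z) + f(d+w) f(d-w) f(z+c) f(z-c) = f(c+d) f(c-d) f(w+z) f(w-z)\<close>,
  which holds for every \<open>f\<close> with \<open>f(x+y) f(x-y) = \<alpha>(x) \<beta>(y) - \<beta>(x) \<alpha>(y)\<close>, an addition theorem
  satisfied by the theta function and by the sine.
  Hence \<open>K\<close> may be sorted to \<open>replicate j2 1 @ replicate (J - j2) 0\<close>. Cutting the column after its
  first \<open>j2\<close> vertices and summing over the number \<open>k\<close> of ones of the upper word in the first part
  gives the factorization; the dynamical parameter of the first part is shifted by the letters of
  the second.\<close>

section \<open>Column weights\<close>

lemma ipos_0 [simp]: "ipos i1 J1 K 0 = i1"
  by (simp add: ipos_def)

lemma ipos_Cons_Suc: "ipos i1 (a # as) (c # cs) (Suc m) = ipos (i1 + a - c) as cs m"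
  unfolding ipos_def sum.lessThan_Suc_shift by simp

lemma Phi_Cons_Suc: "Phi \<eta> (a # as) lam (Suc m) = Phi \<eta> as lam m"
proof -
  have "(\<Sum>l\<in>{Suc (Suc m)..<Suc (length as)}. 1 - 2 * (a # as) ! l) = (\<Sum>l\<in>{Suc m..<length as}. 1 - 2 * as ! l)"
    unfolding sum.shift_bounds_Suc_ivl by simp
  then show ?thesis unfolding Phi_def by simp
qed

lemma Phi_Cons_0: "Phi \<eta> (a # as) lam 0 = lam - 2 * \<eta> * of_int (int (length as) - 2 * sum_list as)"
proof -
  have "(\<Sum>l\<in>{Suc 0..<Suc (length as)}. 1 - 2 * (a # as) ! l) = (\<Sum>l<length as. 1 - 2 * as ! l)"
    unfolding sum.shift_bounds_Suc_ivl by (simp add: atLeast0LessThan)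
  also have "\<dots> = int (length as) - 2 * sum_list as"
    by (simp add: sum_subtractf sum_distrib_left[symmetric] sum_list_sum_nth atLeast0LessThan)
  finally show ?thesis unfolding Phi_def by simp
qed

lemma W1_neg [simp]: "k < 0 \<Longrightarrow> W1 f \<eta> \<Lambda> k a k' c v lam = 0"
  by (simp add: W1_def)

lemma bits_0: "bits 0 j = (if j = 0 then {[]} else {})"
  by (auto simp: bits_def)

lemma bits_Suc: "bits (Suc n) j = Cons 0 ` bits n j \<union> Cons 1 ` bits n (j - 1)"
proof
  show "bits (Suc n) j \<subseteq> Cons 0 ` bits n j \<union> Cons 1 ` bits n (j - 1)"
  proof
    fix xs assume xs: "xs \<in> bits (Suc n) j"
    then obtain x ys where "xs = x # ys" by (cases xs) (auto simp: bits_def)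
    with xs show "xs \<in> Cons 0 ` bits n j \<union> Cons 1 ` bits n (j - 1)"
      by (auto simp: bits_def)
  qed
qed (auto simp: bits_def)

lemma finite_bits [simp]: "finite (bits n j)"
proof (rule finite_subset)
  show "bits n j \<subseteq> {xs. set xs \<subseteq> {0, 1} \<and> length xs = n}" by (auto simp: bits_def)
qed (rule finite_lists_length_eq, simp)

locale dynamical_weights =
  fixes f :: "complex \<Rightarrow> complex" and \<eta> \<Lambda> :: complex
begin

text \<open>\<open>Wcol\<close>, unfolded from its first vertex, whose dynamical parameter is \<open>Phi\<close>: \<open>lam\<close>
  shifted by the letters of the rest of the upper word.\<close>
fun column_weight :: "int \<Rightarrow> int list \<Rightarrow> int list \<Rightarrow> int \<Rightarrow> complex \<Rightarrow> complex \<Rightarrow> complex" where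
  "column_weight i [] cs i2 v lam = (if cs = [] \<and> i = i2 \<and> 0 \<le> i then 1 else 0)"
| "column_weight i (a # as) [] i2 v lam = 0"
| "column_weight i (a # as) (c # cs) i2 v lam =
     W1 f \<eta> \<Lambda> i a (i + a - c) c v (lam - 2 * \<eta> * of_int (int (length as) - 2 * sum_list as))
     * column_weight (i + a - c) as cs i2 (v + 2 * \<eta>) lam"

lemma Wcol_eq_column_weight:
  "length J1 = length K \<Longrightarrow> Wcol f \<eta> \<Lambda> i1 J1 i2 K v lam = column_weight i1 J1 K i2 v lam"
proof (induction J1 arbitrary: i1 K v)
  case Nil
  then show ?case by (simp add: Wcol_def ipos_def)
next
  case (Cons a as)
  then obtain c cs where K: "K = c # cs" and len: "length as = length cs"
    by (cases K) auto
  have admissible: "((\<forall>m\<le>length (a # as). 0 \<le> ipos i1 (a # as) K m) \<and> ipos i1 (a # as) K (length (a # as)) = i2)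
      \<longleftrightarrow> 0 \<le> i1 \<and> (\<forall>m\<le>length as. 0 \<le> ipos (i1 + a - c) as cs m) \<and> ipos (i1 + a - c) as cs (length as) = i2"
    by (simp add: K less_Suc_eq_le[symmetric] All_less_Suc2 ipos_Cons_Suc)
  have product: "(\<Prod>m<length (a # as). W1 f \<eta> \<Lambda> (ipos i1 (a # as) K m) ((a # as) ! m)
          (ipos i1 (a # as) K (Suc m)) (K ! m) (v + 2 * \<eta> * of_nat m) (Phi \<eta> (a # as) lam m))
      = W1 f \<eta> \<Lambda> i1 a (i1 + a - c) c v (lam - 2 * \<eta> * of_int (int (length as) - 2 * sum_list as))
        * (\<Prod>m<length as. W1 f \<eta> \<Lambda> (ipos (i1 + a - c) as cs m) (as ! m)
            (ipos (i1 + a - c) as cs (Suc m)) (cs ! m) (v + 2 * \<eta> + 2 * \<eta> * of_nat m) (Phi \<eta> as lam m))"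
    unfolding K length_Cons prod.lessThan_Suc_shift
    by (simp add: ipos_Cons_Suc Phi_Cons_Suc Phi_Cons_0 algebra_simps)
  show ?case
    using Cons.IH[OF len, of "i1 + a - c" "v + 2 * \<eta>"]
    unfolding Wcol_def[of _ _ _ _ "a # as"] admissible product
    by (auto simp: K Wcol_def split: if_split_asm)
qed

definition fused_weight :: "int \<Rightarrow> int \<Rightarrow> int \<Rightarrow> int list \<Rightarrow> complex \<Rightarrow> complex \<Rightarrow> complex" where
  "fused_weight i j i2 K v lam = (\<Sum>as\<in>bits (length K) j. column_weight i as K i2 v lam)"

lemma WfusedK_eq_fused_weight:
  "length K = J \<Longrightarrow> WfusedK f \<eta> \<Lambda> J i1 j1 i2 K v lam = fused_weight i1 j1 i2 K v lam"
  unfolding WfusedK_def fused_weight_def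
  by (rule sum.cong) (auto simp: bits_def Wcol_eq_column_weight)

lemma fused_weight_Nil: "fused_weight i j i2 [] v lam = (if j = 0 \<and> i = i2 \<and> 0 \<le> i then 1 else 0)"
  by (simp add: fused_weight_def bits_0)

lemma fused_weight_Cons: "fused_weight i j i2 (c # cs) v lam =
    W1 f \<eta> \<Lambda> i 0 (i - c) c v (lam - 2 * \<eta> * of_int (int (length cs) - 2 * j))
      * fused_weight (i - c) j i2 cs (v + 2 * \<eta>) lam
  + W1 f \<eta> \<Lambda> i 1 (i + 1 - c) c v (lam - 2 * \<eta> * of_int (int (length cs) - 2 * (j - 1)))
      * fused_weight (i + 1 - c) (j - 1) i2 cs (v + 2 * \<eta>) lam"
proof -
  have disjoint: "Cons 0 ` bits (length cs) j \<inter> Cons 1 ` bits (length cs) (j - 1) = {}" by auto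
  have "fused_weight i j i2 (c # cs) v lam
      = (\<Sum>as\<in>bits (length cs) j. column_weight i (0 # as) (c # cs) i2 v lam)
      + (\<Sum>as\<in>bits (length cs) (j - 1). column_weight i (1 # as) (c # cs) i2 v lam)"
    unfolding fused_weight_def length_Cons bits_Suc
    by (subst sum.union_disjoint[OF _ _ disjoint]; simp add: sum.reindex)
  also have "\<dots> = W1 f \<eta> \<Lambda> i 0 (i - c) c v (lam - 2 * \<eta> * of_int (int (length cs) - 2 * j))
      * fused_weight (i - c) j i2 cs (v + 2 * \<eta>) lam
    + W1 f \<eta> \<Lambda> i 1 (i + 1 - c) c v (lam - 2 * \<eta> * of_int (int (length cs) - 2 * (j - 1)))
      * fused_weight (i + 1 - c) (j - 1) i2 cs (v + 2 * \<eta>) lam"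
    unfolding fused_weight_def sum_distrib_left
    by (intro arg_cong2[where f = "(+)"] sum.cong) (auto simp: bits_def)
  finally show ?thesis .
qed

lemma fused_weight_neg_start: "i < 0 \<Longrightarrow> fused_weight i j i2 cs v lam = 0"
  by (cases cs) (simp_all add: fused_weight_Nil fused_weight_Cons)

lemma fused_weight_neg_end: "i2 < 0 \<Longrightarrow> fused_weight i j i2 cs v lam = 0"
  by (induction cs arbitrary: i j v) (auto simp: fused_weight_Nil fused_weight_Cons)

lemma fused_weight_neg_count: "j < 0 \<Longrightarrow> fused_weight i j i2 cs v lam = 0"
  by (induction cs arbitrary: i j v) (auto simp: fused_weight_Nil fused_weight_Cons)

lemma Wfused_eq_fused_weight: "Wfused f \<eta> \<Lambda> n i j i2 j2 v lam =
   (if j2 < 0 \<or> int n < j2 then 0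
    else fused_weight i j i2 (replicate (nat j2) 1 @ replicate (n - nat j2) 0) v lam)"
  unfolding Wfused_def
  by (auto simp: WfusedK_eq_fused_weight fused_weight_neg_start fused_weight_neg_end fused_weight_neg_count)

lemma fused_weight_append:
  "length cs \<le> N \<Longrightarrow> fused_weight i j i2 (cs @ ds) v lam =
    (\<Sum>k=0..N. fused_weight i (int k) (i + int k - sum_list cs) cs v
                  (lam - 2 * \<eta> * of_int (int (length ds) - 2 * (j - int k)))
              * fused_weight (i + int k - sum_list cs) (j - int k) i2 ds (v + 2 * \<eta> * of_nat (length cs)) lam)"
proof (induction cs arbitrary: i j v N)
  case Nil
  have "(\<Sum>k=0..N. fused_weight i (int k) (i + int k) [] v (lam - 2 * \<eta> * of_int (int (length ds) - 2 * (j - int k)))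
        * fused_weight (i + int k) (j - int k) i2 ds v lam)
      = (\<Sum>k=0..N. if k = 0 then fused_weight i j i2 ds v lam else 0)"
    by (rule sum.cong) (auto simp: fused_weight_Nil fused_weight_neg_start)
  then show ?case by simp
next
  case (Cons c cs)
  obtain M where N: "N = Suc M" and M: "length cs \<le> M"
    using Cons.prems by (cases N) auto
  define w0 where "w0 = W1 f \<eta> \<Lambda> i 0 (i - c) c v (lam - 2 * \<eta> * of_int (int (length (cs @ ds)) - 2 * j))"
  define w1 where "w1 = W1 f \<eta> \<Lambda> i 1 (i + 1 - c) c v (lam - 2 * \<eta> * of_int (int (length (cs @ ds)) - 2 * (j - 1)))"
  define lower where "lower k = fused_weight (i + int k - sum_list (c # cs)) (j - int k) i2 ds
      (v + 2 * \<eta> * of_nat (length (c # cs))) lam" for k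
  define \<mu> where "\<mu> k = lam - 2 * \<eta> * of_int (int (length ds) - 2 * (j - int k))" for k
  define A where "A k = fused_weight (i - c) (int k) (i + int k - sum_list (c # cs)) cs (v + 2 * \<eta>) (\<mu> k) * lower k" for k
  define B where "B k = fused_weight (i + 1 - c) (int k - 1) (i + int k - sum_list (c # cs)) cs (v + 2 * \<eta>) (\<mu> k) * lower k" for k
  have IH0: "fused_weight (i - c) j i2 (cs @ ds) (v + 2 * \<eta>) lam = (\<Sum>k=0..N. A k)"
    unfolding Cons.IH[OF Suc_leD[OF Cons.prems[unfolded length_Cons]]] A_def lower_def \<mu>_def
    by (rule sum.cong) (simp_all add: algebra_simps)
  have IH1: "fused_weight (i + 1 - c) (j - 1) i2 (cs @ ds) (v + 2 * \<eta>) lam = (\<Sum>k=0..N. B k)"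
  proof -
    have "B 0 = 0" by (simp add: B_def fused_weight_neg_count)
    then have "(\<Sum>k=0..N. B k) = (\<Sum>k=0..M. B (Suc k))"
      unfolding N sum.atLeast0_atMost_Suc_shift by simp
    also have "\<dots> = fused_weight (i + 1 - c) (j - 1) i2 (cs @ ds) (v + 2 * \<eta>) lam"
      unfolding Cons.IH[OF M] B_def lower_def \<mu>_def
      by (rule sum.cong) (simp_all add: algebra_simps)
    finally show ?thesis ..
  qed
  have summand: "fused_weight i (int k) (i + int k - sum_list (c # cs)) (c # cs) v (\<mu> k) * lower k
      = w0 * A k + w1 * B k" for k
  proof -
    have shift0: "\<mu> k - 2 * \<eta> * of_int (int (length cs) - 2 * int k) = lam - 2 * \<eta> * of_int (int (length (cs @ ds)) - 2 * j)"
      and shift1: "\<mu> k - 2 * \<eta> * of_int (int (length cs) - 2 * (int k - 1))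
        = lam - 2 * \<eta> * of_int (int (length (cs @ ds)) - 2 * (j - 1))"
      by (simp_all add: \<mu>_def algebra_simps)
    show ?thesis
      unfolding fused_weight_Cons shift0 shift1 w0_def w1_def A_def B_def by (simp add: algebra_simps)
  qed
  have "fused_weight i j i2 ((c # cs) @ ds) v lam
      = w0 * fused_weight (i - c) j i2 (cs @ ds) (v + 2 * \<eta>) lam
      + w1 * fused_weight (i + 1 - c) (j - 1) i2 (cs @ ds) (v + 2 * \<eta>) lam"
    unfolding w0_def w1_def by (simp add: fused_weight_Cons)
  also have "\<dots> = (\<Sum>k=0..N. w0 * A k + w1 * B k)"
    unfolding IH0 IH1 by (simp add: sum.distrib sum_distrib_left)
  finally show ?case
    unfolding summand[symmetric] lower_def \<mu>_def .
qed

end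

section \<open>The exchange relation\<close>

lemma three_term_identity:
  fixes g :: "'a::comm_ring \<Rightarrow> 'b::comm_ring"
  assumes "\<And>x y. g (x + y) * g (x - y) = \<alpha> x * \<beta> y - \<beta> x * \<alpha> y"
  shows "g (c + w) * g (c - w) * (g (d + z) * g (d - z)) + g (d + w) * g (d - w) * (g (z + c) * g (z - c))
       = g (c + d) * g (c - d) * (g (w + z) * g (w - z))"
  unfolding assms by (simp add: algebra_simps)

locale exchange_weights = dynamical_weights +
  fixes \<alpha> \<beta> :: "complex \<Rightarrow> complex"
  assumes f_minus: "\<And>x. f (- x) = - f x"
    and f_add_mult_diff: "\<And>x y. f (x + y) * f (x - y) = \<alpha> x * \<beta> y - \<beta> x * \<alpha> y"
    and f_two_eta: "f (2 * \<eta>) \<noteq> 0"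
begin

lemma f_zero [simp]: "f 0 = 0"
  using f_minus[of 0] by simp

definition regular_spectral :: "complex \<Rightarrow> bool" where
  "regular_spectral v \<longleftrightarrow> (\<forall>m::int. f (\<eta> * \<Lambda> - v - 2 * \<eta> * of_int m) \<noteq> 0)"

definition regular_dynamical :: "complex \<Rightarrow> bool" where
  "regular_dynamical \<mu> \<longleftrightarrow> (\<forall>m::int. f (\<mu> + 2 * \<eta> * of_int m) \<noteq> 0)"

lemma regular_spectral_step: "regular_spectral v \<Longrightarrow> regular_spectral (v + 2 * \<eta>)"
  unfolding regular_spectral_def
proof
  fix m :: int
  assume "\<forall>m::int. f (\<eta> * \<Lambda> - v - 2 * \<eta> * of_int m) \<noteq> 0"
  then have "f (\<eta> * \<Lambda> - v - 2 * \<eta> * of_int (m + 1)) \<noteq> 0" ..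
  then show "f (\<eta> * \<Lambda> - (v + 2 * \<eta>) - 2 * \<eta> * of_int m) \<noteq> 0"
    by (simp add: algebra_simps)
qed

lemma regular_dynamical_shift: "regular_dynamical \<mu> \<Longrightarrow> regular_dynamical (\<mu> + 2 * \<eta> * of_int k)"
  unfolding regular_dynamical_def
proof
  fix m :: int
  assume "\<forall>m::int. f (\<mu> + 2 * \<eta> * of_int m) \<noteq> 0"
  then have "f (\<mu> + 2 * \<eta> * of_int (k + m)) \<noteq> 0" ..
  then show "f (\<mu> + 2 * \<eta> * of_int k + 2 * \<eta> * of_int m) \<noteq> 0"
    by (simp add: algebra_simps)
qed

lemma regular_spectral_nonzero:
  assumes "regular_spectral v"
  shows "f (\<eta> * \<Lambda> - v) \<noteq> 0" "f (\<eta> * \<Lambda> - (v + 2 * \<eta>)) \<noteq> 0"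
  using assms[unfolded regular_spectral_def, rule_format, of 0]
    assms[unfolded regular_spectral_def, rule_format, of 1]
  by (simp_all add: algebra_simps)

lemma regular_dynamical_nonzero:
  assumes "regular_dynamical \<mu>"
  shows "f \<mu> \<noteq> 0" "f (\<mu> - 2 * \<eta>) \<noteq> 0" "f (\<mu> + 2 * \<eta>) \<noteq> 0"
  using assms[unfolded regular_dynamical_def, rule_format, of 0]
    assms[unfolded regular_dynamical_def, rule_format, of "-1"]
    assms[unfolded regular_dynamical_def, rule_format, of 1]
  by (simp_all add: algebra_simps)

text \<open>Writing \<open>exchange_one_upper\<close> below as \<open>A + B = C + D\<close>, the next two lemmas evaluate
  \<open>A - C\<close> and \<open>D - B\<close> to the same value: for the \<open>c, d, w, z\<close> chosen in the proofs, each
  difference is an instance of the three-term identity.\<close>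
lemma exchange_one_upper_left:
  assumes "0 \<le> i" and v: "regular_spectral v" and \<mu>: "regular_dynamical \<mu>"
  shows "W1 f \<eta> \<Lambda> i 1 i 1 v (\<mu> - 2 * \<eta>) * W1 f \<eta> \<Lambda> i 0 i 0 (v + 2 * \<eta>) \<mu>
       - W1 f \<eta> \<Lambda> i 1 (i + 1) 0 v (\<mu> - 2 * \<eta>) * W1 f \<eta> \<Lambda> (i + 1) 0 i 1 (v + 2 * \<eta>) \<mu>
       = f (\<mu> + 2 * \<eta> * (2 * of_int i - \<Lambda>)) * (f (v + \<eta> * \<Lambda> + 2 * \<eta>) * f (v - \<eta> * \<Lambda>))
         / (f (\<eta> * \<Lambda> - v) * f (\<eta> * \<Lambda> - (v + 2 * \<eta>)) * f \<mu>)"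
  (is "?lhs = ?rhs")
proof -
  define c where "c = \<eta> * (2 * of_int i - \<Lambda>) + \<eta>"
  define d where "d = \<mu> + \<eta> * (2 * of_int i - \<Lambda>) - \<eta>"
  define w where "w = v + \<eta>"
  define z where "z = \<eta> * \<Lambda> + \<eta>"
  note defs = c_def d_def w_def z_def
  define D where "D = f (\<eta> * \<Lambda> - v) * f (\<mu> - 2 * \<eta>) * f (\<eta> * \<Lambda> - (v + 2 * \<eta>)) * f \<mu>"
  have nonzero: "f (\<eta> * \<Lambda> - v) \<noteq> 0" "f (\<eta> * \<Lambda> - (v + 2 * \<eta>)) \<noteq> 0" "f \<mu> \<noteq> 0" "f (\<mu> - 2 * \<eta>) \<noteq> 0"
    using regular_spectral_nonzero[OF v] regular_dynamical_nonzero[OF \<mu>] by auto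
  have "?lhs = - (f (c + w) * f (c - w) * (f (d + z) * f (d - z)) + f (d + w) * f (d - w) * (f (z + c) * f (z - c))) / D"
  proof -
    have weights: "W1 f \<eta> \<Lambda> i 1 i 1 v (\<mu> - 2 * \<eta>) = f (c - w) * f (d - z) / (f (\<eta> * \<Lambda> - v) * f (\<mu> - 2 * \<eta>))"
      "W1 f \<eta> \<Lambda> i 0 i 0 (v + 2 * \<eta>) \<mu> = f (- (c + w)) * f (d + z) / (f (\<eta> * \<Lambda> - (v + 2 * \<eta>)) * f \<mu>)"
      "W1 f \<eta> \<Lambda> i 1 (i + 1) 0 v (\<mu> - 2 * \<eta>) = f (d + w) * f (2 * \<eta>) / (f (\<eta> * \<Lambda> - v) * f (\<mu> - 2 * \<eta>))"
      "W1 f \<eta> \<Lambda> (i + 1) 0 i 1 (v + 2 * \<eta>) \<mu>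
        = f (d - w) * f (z - c) * f (z + c) / (f (\<eta> * \<Lambda> - (v + 2 * \<eta>)) * f \<mu> * f (2 * \<eta>))"
      using \<open>0 \<le> i\<close> by (simp_all add: W1_def defs algebra_simps)
    show ?thesis
      unfolding weights D_def f_minus using nonzero f_two_eta by (simp add: field_simps)
  qed
  also have "\<dots> = - f (c + d) * f (c - d) * (f (w + z) * f (w - z)) / D"
    by (simp add: three_term_identity[of f \<alpha> \<beta>, OF f_add_mult_diff])
  also have "\<dots> = ?rhs"
  proof -
    have "f (c - d) = - f (\<mu> - 2 * \<eta>)" "f (c + d) = f (\<mu> + 2 * \<eta> * (2 * of_int i - \<Lambda>))"
      "f (w + z) = f (v + \<eta> * \<Lambda> + 2 * \<eta>)" "f (w - z) = f (v - \<eta> * \<Lambda>)"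
      by (simp_all add: defs algebra_simps f_minus[symmetric])
    then show ?thesis
      using nonzero unfolding D_def by (simp add: field_simps)
  qed
  finally show ?thesis .
qed

lemma exchange_one_upper_right:
  assumes "0 \<le> i" and v: "regular_spectral v" and \<mu>: "regular_dynamical \<mu>"
  shows "W1 f \<eta> \<Lambda> i 0 i 0 v (\<mu> + 2 * \<eta>) * W1 f \<eta> \<Lambda> i 1 i 1 (v + 2 * \<eta>) \<mu>
       - W1 f \<eta> \<Lambda> i 0 (i - 1) 1 v (\<mu> + 2 * \<eta>) * W1 f \<eta> \<Lambda> (i - 1) 1 i 0 (v + 2 * \<eta>) \<mu>
       = f (\<mu> + 2 * \<eta> * (2 * of_int i - \<Lambda>)) * (f (v + \<eta> * \<Lambda> + 2 * \<eta>) * f (v - \<eta> * \<Lambda>))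
         / (f (\<eta> * \<Lambda> - v) * f (\<eta> * \<Lambda> - (v + 2 * \<eta>)) * f \<mu>)"
  (is "?lhs = ?rhs")
proof -
  define c where "c = \<eta> * (2 * of_int i - \<Lambda>) - \<eta>"
  define d where "d = \<mu> + \<eta> * (2 * of_int i - \<Lambda>) + \<eta>"
  define w where "w = v + \<eta>"
  define z where "z = \<eta> * \<Lambda> + \<eta>"
  note defs = c_def d_def w_def z_def
  define D where "D = f (\<eta> * \<Lambda> - v) * f (\<mu> + 2 * \<eta>) * f (\<eta> * \<Lambda> - (v + 2 * \<eta>)) * f \<mu>"
  have nonzero: "f (\<eta> * \<Lambda> - v) \<noteq> 0" "f (\<eta> * \<Lambda> - (v + 2 * \<eta>)) \<noteq> 0" "f \<mu> \<noteq> 0" "f (\<mu> + 2 * \<eta>) \<noteq> 0"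
    using regular_spectral_nonzero[OF v] regular_dynamical_nonzero[OF \<mu>] by auto
  have "?lhs = - (f (c + w) * f (c - w) * (f (d + z) * f (d - z)) + f (d + w) * f (d - w) * (f (z + c) * f (z - c))) / D"
  proof -
    have weights: "W1 f \<eta> \<Lambda> i 0 i 0 v (\<mu> + 2 * \<eta>) = f (- (c + w)) * f (d + z) / (f (\<eta> * \<Lambda> - v) * f (\<mu> + 2 * \<eta>))"
      "W1 f \<eta> \<Lambda> i 1 i 1 (v + 2 * \<eta>) \<mu> = f (c - w) * f (d - z) / (f (\<eta> * \<Lambda> - (v + 2 * \<eta>)) * f \<mu>)"
      using \<open>0 \<le> i\<close> by (simp_all add: W1_def defs algebra_simps)
    have "W1 f \<eta> \<Lambda> i 0 (i - 1) 1 v (\<mu> + 2 * \<eta>) * W1 f \<eta> \<Lambda> (i - 1) 1 i 0 (v + 2 * \<eta>) \<mu>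
        = f (d - w) * f (z - c) * f (z + c) / (f (\<eta> * \<Lambda> - v) * f (\<mu> + 2 * \<eta>) * f (2 * \<eta>))
          * (f (d + w) * f (2 * \<eta>) / (f (\<eta> * \<Lambda> - (v + 2 * \<eta>)) * f \<mu>))"
      \<comment> \<open>for \<open>i = 0\<close> both sides vanish, the right one through \<open>f (z + c) = f 0\<close>\<close>
      using \<open>0 \<le> i\<close> by (cases "i = 0") (simp_all add: W1_def defs algebra_simps)
    then show ?thesis
      unfolding weights D_def f_minus using nonzero f_two_eta by (simp add: field_simps)
  qed
  also have "\<dots> = - f (c + d) * f (c - d) * (f (w + z) * f (w - z)) / D"
    by (simp add: three_term_identity[of f \<alpha> \<beta>, OF f_add_mult_diff])
  also have "\<dots> = ?rhs"
  proof -
    have "f (c - d) = - f (\<mu> + 2 * \<eta>)" "f (c + d) = f (\<mu> + 2 * \<eta> * (2 * of_int i - \<Lambda>))"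
      "f (w + z) = f (v + \<eta> * \<Lambda> + 2 * \<eta>)" "f (w - z) = f (v - \<eta> * \<Lambda>)"
      by (simp_all add: defs algebra_simps f_minus[symmetric])
    then show ?thesis
      using nonzero unfolding D_def by (simp add: field_simps)
  qed
  finally show ?thesis .
qed

lemma exchange_one_upper:
  assumes "regular_spectral v" "regular_dynamical \<mu>"
  shows "W1 f \<eta> \<Lambda> i 1 i 1 v (\<mu> - 2 * \<eta>) * W1 f \<eta> \<Lambda> i 0 i 0 (v + 2 * \<eta>) \<mu>
       + W1 f \<eta> \<Lambda> i 0 (i - 1) 1 v (\<mu> + 2 * \<eta>) * W1 f \<eta> \<Lambda> (i - 1) 1 i 0 (v + 2 * \<eta>) \<mu>
       = W1 f \<eta> \<Lambda> i 1 (i + 1) 0 v (\<mu> - 2 * \<eta>) * W1 f \<eta> \<Lambda> (i + 1) 0 i 1 (v + 2 * \<eta>) \<mu>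
       + W1 f \<eta> \<Lambda> i 0 i 0 v (\<mu> + 2 * \<eta>) * W1 f \<eta> \<Lambda> i 1 i 1 (v + 2 * \<eta>) \<mu>"
proof (cases "0 \<le> i")
  case True
  with exchange_one_upper_left[OF _ assms] exchange_one_upper_right[OF _ assms]
  show ?thesis by (simp add: algebra_simps)
qed simp

lemma exchange_no_upper:
  assumes v: "regular_spectral v" and \<mu>: "regular_dynamical \<mu>"
  shows "W1 f \<eta> \<Lambda> i 0 (i - 1) 1 v (\<mu> - 2 * \<eta>) * W1 f \<eta> \<Lambda> (i - 1) 0 (i - 1) 0 (v + 2 * \<eta>) \<mu>
       = W1 f \<eta> \<Lambda> i 0 i 0 v (\<mu> - 2 * \<eta>) * W1 f \<eta> \<Lambda> i 0 (i - 1) 1 (v + 2 * \<eta>) \<mu>"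
proof (cases "1 \<le> i")
  case True
  have "f (\<eta> * \<Lambda> - v) \<noteq> 0" "f (\<eta> * \<Lambda> - (v + 2 * \<eta>)) \<noteq> 0" "f \<mu> \<noteq> 0" "f (\<mu> - 2 * \<eta>) \<noteq> 0"
    using regular_spectral_nonzero[OF v] regular_dynamical_nonzero[OF \<mu>] by auto
  with True f_two_eta show ?thesis
    by (simp add: W1_def field_simps)
qed (auto simp: W1_def)

lemma exchange_two_upper:
  assumes v: "regular_spectral v" and \<mu>: "regular_dynamical \<mu>"
  shows "W1 f \<eta> \<Lambda> i 1 i 1 v (\<mu> + 2 * \<eta>) * W1 f \<eta> \<Lambda> i 1 (i + 1) 0 (v + 2 * \<eta>) \<mu>
       = W1 f \<eta> \<Lambda> i 1 (i + 1) 0 v (\<mu> + 2 * \<eta>) * W1 f \<eta> \<Lambda> (i + 1) 1 (i + 1) 1 (v + 2 * \<eta>) \<mu>"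
proof (cases "0 \<le> i")
  case True
  have "f (\<eta> * \<Lambda> - v) \<noteq> 0" "f (\<eta> * \<Lambda> - (v + 2 * \<eta>)) \<noteq> 0" "f \<mu> \<noteq> 0" "f (\<mu> + 2 * \<eta>) \<noteq> 0"
    using regular_spectral_nonzero[OF v] regular_dynamical_nonzero[OF \<mu>] by auto
  with True f_two_eta show ?thesis
    by (simp add: W1_def field_simps)
qed simp

lemma fused_weight_swap:
  assumes v: "regular_spectral v" and lam: "regular_dynamical lam"
  shows "fused_weight i j i2 (1 # 0 # cs) v lam = fused_weight i j i2 (0 # 1 # cs) v lam"
proof -
  define \<mu>0 where "\<mu>0 = lam + 2 * \<eta> * of_int (2 * j - int (length cs))"
  define \<mu>1 where "\<mu>1 = lam + 2 * \<eta> * of_int (2 * (j - 1) - int (length cs))"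
  define \<mu>2 where "\<mu>2 = lam + 2 * \<eta> * of_int (2 * (j - 2) - int (length cs))"
  define R0 where "R0 = fused_weight (i - 1) j i2 cs (v + 2 * \<eta> + 2 * \<eta>) lam"
  define R1 where "R1 = fused_weight i (j - 1) i2 cs (v + 2 * \<eta> + 2 * \<eta>) lam"
  define R2 where "R2 = fused_weight (i + 1) (j - 2) i2 cs (v + 2 * \<eta> + 2 * \<eta>) lam"
  have "regular_dynamical \<mu>0" "regular_dynamical \<mu>1" "regular_dynamical \<mu>2"
    unfolding \<mu>0_def \<mu>1_def \<mu>2_def by (intro regular_dynamical_shift[OF lam])+
  note exchange = exchange_no_upper[OF v this(1)] exchange_one_upper[OF v this(2)] exchange_two_upper[OF v this(3)]
  have "fused_weight i j i2 (1 # 0 # cs) v lam =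
      W1 f \<eta> \<Lambda> i 0 (i - 1) 1 v (\<mu>0 - 2 * \<eta>) * W1 f \<eta> \<Lambda> (i - 1) 0 (i - 1) 0 (v + 2 * \<eta>) \<mu>0 * R0
    + (W1 f \<eta> \<Lambda> i 1 i 1 v (\<mu>1 - 2 * \<eta>) * W1 f \<eta> \<Lambda> i 0 i 0 (v + 2 * \<eta>) \<mu>1
       + W1 f \<eta> \<Lambda> i 0 (i - 1) 1 v (\<mu>1 + 2 * \<eta>) * W1 f \<eta> \<Lambda> (i - 1) 1 i 0 (v + 2 * \<eta>) \<mu>1) * R1
    + W1 f \<eta> \<Lambda> i 1 i 1 v (\<mu>2 + 2 * \<eta>) * W1 f \<eta> \<Lambda> i 1 (i + 1) 0 (v + 2 * \<eta>) \<mu>2 * R2"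
    by (simp add: fused_weight_Cons \<mu>0_def \<mu>1_def \<mu>2_def R0_def R1_def R2_def algebra_simps)
  also have "\<dots> =
      W1 f \<eta> \<Lambda> i 0 i 0 v (\<mu>0 - 2 * \<eta>) * W1 f \<eta> \<Lambda> i 0 (i - 1) 1 (v + 2 * \<eta>) \<mu>0 * R0
    + (W1 f \<eta> \<Lambda> i 1 (i + 1) 0 v (\<mu>1 - 2 * \<eta>) * W1 f \<eta> \<Lambda> (i + 1) 0 i 1 (v + 2 * \<eta>) \<mu>1
       + W1 f \<eta> \<Lambda> i 0 i 0 v (\<mu>1 + 2 * \<eta>) * W1 f \<eta> \<Lambda> i 1 i 1 (v + 2 * \<eta>) \<mu>1) * R1
    + W1 f \<eta> \<Lambda> i 1 (i + 1) 0 v (\<mu>2 + 2 * \<eta>) * W1 f \<eta> \<Lambda> (i + 1) 1 (i + 1) 1 (v + 2 * \<eta>) \<mu>2 * R2"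
    unfolding exchange ..
  also have "\<dots> = fused_weight i j i2 (0 # 1 # cs) v lam"
    by (simp add: fused_weight_Cons \<mu>0_def \<mu>1_def \<mu>2_def R0_def R1_def R2_def algebra_simps)
  finally show ?thesis .
qed

lemma fused_weight_Cons_cong:
  assumes "\<And>i j i2 v. regular_spectral v \<Longrightarrow> fused_weight i j i2 X v lam = fused_weight i j i2 Y v lam"
    and "length X = length Y" and "regular_spectral v"
  shows "fused_weight i j i2 (c # X) v lam = fused_weight i j i2 (c # Y) v lam"
  using assms(1)[OF regular_spectral_step[OF assms(3)]] assms(2) by (simp add: fused_weight_Cons)

lemma fused_weight_move_zero:
  assumes "regular_dynamical lam"
  shows "regular_spectral v \<Longrightarrow>
    fused_weight i j i2 (0 # replicate p 1 @ Z) v lam = fused_weight i j i2 (replicate p 1 @ 0 # Z) v lam"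
proof (induction p arbitrary: i j i2 v)
  case (Suc p)
  have "fused_weight i j i2 (0 # replicate (Suc p) 1 @ Z) v lam
      = fused_weight i j i2 (1 # 0 # (replicate p 1 @ Z)) v lam"
    using fused_weight_swap[OF Suc.prems assms] by simp
  also have "\<dots> = fused_weight i j i2 (1 # (replicate p 1 @ 0 # Z)) v lam"
    by (rule fused_weight_Cons_cong[OF _ _ Suc.prems]) (use Suc.IH in auto)
  finally show ?case by simp
qed simp

lemma fused_weight_sort:
  assumes "regular_dynamical lam"
  shows "set K \<subseteq> {0, 1} \<Longrightarrow> regular_spectral v \<Longrightarrow> fused_weight i j i2 K v lam
    = fused_weight i j i2 (replicate (nat (sum_list K)) 1 @ replicate (length K - nat (sum_list K)) 0) v lam"
proof (induction K arbitrary: i j i2 v)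
  case (Cons c cs)
  define p where "p = nat (sum_list cs)"
  define q where "q = length cs - p"
  have bounds: "0 \<le> sum_list cs" "sum_list cs \<le> int (length cs)"
    using Cons.prems(1) by (induction cs) auto
  have sorted_tail: "fused_weight i j i2 (c # cs) v lam = fused_weight i j i2 (c # replicate p 1 @ replicate q 0) v lam"
    by (rule fused_weight_Cons_cong[OF _ _ Cons.prems(2)])
       (use Cons.IH Cons.prems(1) bounds in \<open>auto simp: p_def q_def\<close>)
  consider "c = 1" | "c = 0" using Cons.prems(1) by auto
  then show ?case
  proof cases
    case 1
    then have "nat (sum_list (c # cs)) = Suc p" "length (c # cs) - Suc p = q"
      using bounds by (auto simp: p_def q_def)
    with 1 show ?thesis unfolding sorted_tail by simp
  next
    case 2
    then have "nat (sum_list (c # cs)) = p" "length (c # cs) - p = Suc q"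
      using bounds by (auto simp: p_def q_def)
    with 2 show ?thesis
      unfolding sorted_tail using fused_weight_move_zero[OF assms Cons.prems(2), of i j i2 p "replicate q 0"] by simp
  qed
qed simp

lemma fused_weight_factorization:
  fixes J i1 j1 i2 j2 :: nat
  assumes v: "regular_spectral v" and lam: "regular_dynamical lam" and "j2 \<le> J" and K: "K \<in> bits J (int j2)"
  shows "WfusedK f \<eta> \<Lambda> J (int i1) (int j1) (int i2) K v lam =
    (\<Sum>k=0..J.
       Wfused f \<eta> \<Lambda> j2 (int i1) (int k) (int i1 + int k - int j2) (int j2) v
          (lam - 2 * \<eta> * (of_nat J - 2 * of_nat j1 - of_nat j2 + 2 * of_nat k))
     * Wfused f \<eta> \<Lambda> (J - j2) (int i1 + int k - int j2) (int j1 - int k) (int i2) 0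
          (v + 2 * \<eta> * of_nat j2) lam)"
proof -
  have "length K = J" "set K \<subseteq> {0, 1}" "sum_list K = int j2"
    using K by (auto simp: bits_def)
  then have "WfusedK f \<eta> \<Lambda> J (int i1) (int j1) (int i2) K v lam
      = fused_weight (int i1) (int j1) (int i2) (replicate j2 1 @ replicate (J - j2) 0) v lam"
    using fused_weight_sort[OF lam _ v] by (simp add: WfusedK_eq_fused_weight)
  also have "\<dots> = (\<Sum>k=0..J. fused_weight (int i1) (int k) (int i1 + int k - int j2) (replicate j2 1) v
          (lam - 2 * \<eta> * of_int (int (J - j2) - 2 * (int j1 - int k)))
        * fused_weight (int i1 + int k - int j2) (int j1 - int k) (int i2) (replicate (J - j2) 0)
          (v + 2 * \<eta> * of_nat j2) lam)"
    using fused_weight_append[of "replicate j2 1" J _ _ _ "replicate (J - j2) 0"] \<open>j2 \<le> J\<close>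
    by (simp add: sum_list_replicate)
  also have "\<dots> = (\<Sum>k=0..J.
       Wfused f \<eta> \<Lambda> j2 (int i1) (int k) (int i1 + int k - int j2) (int j2) v
          (lam - 2 * \<eta> * (of_nat J - 2 * of_nat j1 - of_nat j2 + 2 * of_nat k))
     * Wfused f \<eta> \<Lambda> (J - j2) (int i1 + int k - int j2) (int j1 - int k) (int i2) 0
          (v + 2 * \<eta> * of_nat j2) lam)"
    using \<open>j2 \<le> J\<close> by (intro sum.cong) (auto simp: Wfused_eq_fused_weight of_nat_diff algebra_simps)
  finally show ?thesis .
qed

end

section \<open>Theta and sine\<close>

lemma summable_on_int_of_halves:
  fixes g :: "int \<Rightarrow> 'a::{uniform_topological_group_add, topological_comm_monoid_add, ab_group_add, complete_uniform_space}"
  assumes "(\<lambda>n. g (int n)) summable_on UNIV" and "(\<lambda>n. g (- int n)) summable_on UNIV"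
  shows "g summable_on UNIV"
proof -
  have "x = int (nat x) \<or> x = - int (nat (- x))" for x :: int
    by auto
  then have "UNIV = range int \<union> range (\<lambda>n. - int n)" by blast
  moreover have "inj (int :: nat \<Rightarrow> int)" "inj (\<lambda>n::nat. - int n)" by (auto intro: injI)
  ultimately show ?thesis
    using assms summable_on_union[of g "range int" "range (\<lambda>n. - int n)"]
    by (simp add: summable_on_reindex o_def)
qed

lemma summable_on_exp_minus_abs_int: "(\<lambda>j::int. exp (- \<bar>real_of_int j\<bar>)) summable_on UNIV"
proof (rule summable_on_int_of_halves)
  have "(\<lambda>n::nat. exp (-1::real) ^ n) summable_on UNIV"
    by (simp add: summable_on_UNIV_nonneg_real_iff summable_geometric)
  then show "(\<lambda>n. exp (- \<bar>real_of_int (int n)\<bar>)) summable_on UNIV"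
    and "(\<lambda>n. exp (- \<bar>real_of_int (- int n)\<bar>)) summable_on UNIV"
    by (simp_all add: exp_of_nat_mult[symmetric])
qed

lemma gaussian_summable_on_int:
  fixes c b :: real
  assumes "c > 0"
  shows "(\<lambda>j::int. exp (- c * (real_of_int j)^2 + b * real_of_int j)) summable_on UNIV"
proof (rule summable_on_comparison_test)
  define B where "B = \<bar>b\<bar> + 1"
  define M where "M = B^2 / (4 * c)"
  show "(\<lambda>j::int. exp M * exp (- \<bar>real_of_int j\<bar>)) summable_on UNIV"
    using summable_on_exp_minus_abs_int by (rule summable_on_cmult_right)
  fix j :: int
  show "0 \<le> exp (- c * (real_of_int j)^2 + b * real_of_int j)" by simp
  define t where "t = \<bar>real_of_int j\<bar>"
  have "0 \<le> c * (t - B / (2 * c))^2" using \<open>c > 0\<close> by simp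
  also have "c * (t - B / (2 * c))^2 = c * t^2 - B * t + M"
    using \<open>c > 0\<close> unfolding M_def by (simp add: power2_eq_square field_simps)
  finally have "B * t - c * t^2 \<le> M" by simp
  moreover have "b * real_of_int j \<le> \<bar>b\<bar> * t" unfolding t_def by (metis abs_ge_self abs_mult)
  moreover have "t^2 = (real_of_int j)^2" unfolding t_def by simp
  ultimately have "- c * (real_of_int j)^2 + b * real_of_int j \<le> M - t"
    unfolding B_def by (simp add: algebra_simps)
  then show "exp (- c * (real_of_int j)^2 + b * real_of_int j) \<le> exp M * exp (- \<bar>real_of_int j\<bar>)"
    by (simp add: t_def exp_add[symmetric])
qed

lemma summable_on_norm_exp_quadratic:
  fixes A B C :: complex
  assumes "Re A < 0"
  shows "(\<lambda>j::int. norm (exp (A * (of_int j)^2 + B * of_int j + C))) summable_on UNIV"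
proof -
  have "norm (exp (A * (of_int j)^2 + B * of_int j + C))
      = exp (Re C) * exp (- (- Re A) * (real_of_int j)^2 + Re B * real_of_int j)" for j :: int
  proof -
    have "Re (A * (of_int j)^2 + B * of_int j + C) = Re A * (real_of_int j)^2 + Re B * real_of_int j + Re C"
      by (simp add: power2_eq_square)
    then show ?thesis by (simp add: norm_exp_eq_Re exp_add[symmetric] algebra_simps)
  qed
  then show ?thesis
    using summable_on_cmult_right[OF gaussian_summable_on_int, of "- Re A"] assms by simp
qed

lemma summable_on_times:
  fixes g :: "'a \<Rightarrow> complex" and h :: "'b \<Rightarrow> complex"
  assumes g: "(\<lambda>x. norm (g x)) summable_on A" and h: "(\<lambda>y. norm (h y)) summable_on B"
  shows "(\<lambda>(x, y). g x * h y) summable_on A \<times> B"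
proof -
  have "(\<lambda>z. norm ((\<lambda>(x, y). g x * h y) z)) summable_on A \<times> B"
  proof (subst Infinite_Sum.abs_summable_on_Sigma_iff, intro conjI ballI)
    fix x
    show "(\<lambda>y. norm ((\<lambda>(x, y). g x * h y) (x, y))) summable_on B"
      using summable_on_cmult_right[OF h, of "norm (g x)"] by (simp add: norm_mult)
  next
    have "(\<lambda>x. norm (\<Sum>\<^sub>\<infinity>y\<in>B. norm ((\<lambda>(x, y). g x * h y) (x, y))))
        = (\<lambda>x. norm (g x) * (\<Sum>\<^sub>\<infinity>y\<in>B. norm (h y)))"
      by (simp add: norm_mult infsum_cmult_right' abs_mult infsum_nonneg)
    then show "(\<lambda>x. norm (\<Sum>\<^sub>\<infinity>y\<in>B. norm ((\<lambda>(x, y). g x * h y) (x, y)))) summable_on A"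
      using summable_on_cmult_left[OF g] by simp
  qed
  then show ?thesis
    using summable_on_iff_abs_summable_on_complex by blast
qed

lemma infsum_times_infsum:
  fixes g :: "'a \<Rightarrow> complex" and h :: "'b \<Rightarrow> complex"
  assumes "(\<lambda>x. norm (g x)) summable_on A" and "(\<lambda>y. norm (h y)) summable_on B"
  shows "(\<Sum>\<^sub>\<infinity>x\<in>A. g x) * (\<Sum>\<^sub>\<infinity>y\<in>B. h y) = (\<Sum>\<^sub>\<infinity>(x, y)\<in>A \<times> B. g x * h y)"
proof -
  have "(\<Sum>\<^sub>\<infinity>x\<in>A. \<Sum>\<^sub>\<infinity>y\<in>B. g x * h y) = (\<Sum>\<^sub>\<infinity>(x, y)\<in>A \<times> B. g x * h y)"
    using summable_on_times[OF assms] by (rule infsum_Sigma'_banach)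
  then show ?thesis
    by (simp add: infsum_cmult_right' infsum_cmult_left')
qed

definition theta_term :: "complex \<Rightarrow> complex \<Rightarrow> int \<Rightarrow> complex" where
  "theta_term \<tau> z j = exp (pi * \<i> * \<tau> * (of_int j + 1/2)^2 + 2 * pi * \<i> * (of_int j + 1/2) * (z + 1/2))"

text \<open>Terms of the theta series with characteristics \<open>00\<close> and \<open>10\<close> at argument \<open>2 x\<close> and
  period \<open>2 \<tau>\<close>.\<close>
definition theta00_term :: "complex \<Rightarrow> complex \<Rightarrow> int \<Rightarrow> complex" where
  "theta00_term \<tau> x p = exp (2 * pi * \<i> * (\<tau> * (of_int p)^2 + 2 * of_int p * x))"

definition theta10_term :: "complex \<Rightarrow> complex \<Rightarrow> int \<Rightarrow> complex" where
  "theta10_term \<tau> x p = exp (2 * pi * \<i> * (\<tau> * (2 * of_int p + 1)^2 / 4 + (2 * of_int p + 1) * x))"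

lemma theta_term_summable:
  assumes "Im \<tau> > 0"
  shows "(\<lambda>j. norm (theta_term \<tau> z j)) summable_on UNIV"
proof -
  have "theta_term \<tau> z = (\<lambda>j. exp ((pi * \<i> * \<tau>) * (of_int j)^2
      + (pi * \<i> * \<tau> + 2 * pi * \<i> * (z + 1/2)) * of_int j + (pi * \<i> * \<tau> / 4 + pi * \<i> * (z + 1/2))))"
    unfolding theta_term_def by (simp add: fun_eq_iff algebra_simps power2_eq_square)
  then show ?thesis
    by (simp only:) (rule summable_on_norm_exp_quadratic, use assms in simp)
qed

lemma theta00_term_summable:
  assumes "Im \<tau> > 0"
  shows "(\<lambda>j. norm (theta00_term \<tau> z j)) summable_on UNIV"
proof -
  have "theta00_term \<tau> z = (\<lambda>j. exp ((2 * pi * \<i> * \<tau>) * (of_int j)^2 + (4 * pi * \<i> * z) * of_int j + 0))"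
    unfolding theta00_term_def by (simp add: fun_eq_iff algebra_simps power2_eq_square)
  then show ?thesis
    by (simp only:) (rule summable_on_norm_exp_quadratic, use assms in simp)
qed

lemma theta10_term_summable:
  assumes "Im \<tau> > 0"
  shows "(\<lambda>j. norm (theta10_term \<tau> z j)) summable_on UNIV"
proof -
  have "theta10_term \<tau> z = (\<lambda>j. exp ((2 * pi * \<i> * \<tau>) * (of_int j)^2
      + (2 * pi * \<i> * \<tau> + 4 * pi * \<i> * z) * of_int j + (pi * \<i> * \<tau> / 2 + 2 * pi * \<i> * z)))"
    unfolding theta10_term_def by (simp add: fun_eq_iff algebra_simps power2_eq_square add_divide_distrib)
  then show ?thesis
    by (simp only:) (rule summable_on_norm_exp_quadratic, use assms in simp)
qed

lemma theta_fn_eq_infsum: "theta_fn \<tau> z = - (\<Sum>\<^sub>\<infinity>j. theta_term \<tau> z j)"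
  unfolding theta_fn_def theta_term_def by simp

lemma theta_term_reflect: "theta_term \<tau> (- z) (- 1 - j) = - theta_term \<tau> z j"
proof -
  define e where "e = pi * \<i> * \<tau> * (of_int j + 1/2)^2 + 2 * pi * \<i> * (of_int j + 1/2) * (z + 1/2)"
  have "pi * \<i> * \<tau> * (of_int (- 1 - j) + 1/2)^2 + 2 * pi * \<i> * (of_int (- 1 - j) + 1/2) * (- z + 1/2)
      = (e + \<i> * pi) + \<i> * (of_int (- j - 1) * (of_real pi * 2))"
    unfolding e_def by (simp add: field_simps power2_eq_square)
  then have "theta_term \<tau> (- z) (- 1 - j) = exp (e + \<i> * pi)"
    unfolding theta_term_def by (simp only: exp_plus_2pin)
  then show ?thesis
    by (simp add: exp_add theta_term_def e_def)
qed

lemma theta_fn_minus: "theta_fn \<tau> (- z) = - theta_fn \<tau> z"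
proof -
  have "bij_betw (\<lambda>j::int. - 1 - j) UNIV UNIV"
    by (rule bij_betwI[where g = "\<lambda>j. - 1 - j"]) auto
  then have "(\<Sum>\<^sub>\<infinity>j. theta_term \<tau> (- z) j) = (\<Sum>\<^sub>\<infinity>j. theta_term \<tau> (- z) (- 1 - j))"
    by (metis infsum_reindex_bij_betw)
  also have "\<dots> = - (\<Sum>\<^sub>\<infinity>j. theta_term \<tau> z j)"
    by (simp add: theta_term_reflect infsum_uminus)
  finally show ?thesis
    unfolding theta_fn_eq_infsum by simp
qed

lemma theta_term_mult_odd:
  "theta_term \<tau> (x + y) (p + q) * theta_term \<tau> (x - y) (p - q - 1) = theta00_term \<tau> x p * theta10_term \<tau> y q"
proof -
  have "pi * \<i> * \<tau> * (of_int (p + q) + 1/2)^2 + 2 * pi * \<i> * (of_int (p + q) + 1/2) * ((x + y) + 1/2)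
      + (pi * \<i> * \<tau> * (of_int (p - q - 1) + 1/2)^2 + 2 * pi * \<i> * (of_int (p - q - 1) + 1/2) * ((x - y) + 1/2))
      = (2 * pi * \<i> * (\<tau> * (of_int p)^2 + 2 * of_int p * x)
          + 2 * pi * \<i> * (\<tau> * (2 * of_int q + 1)^2 / 4 + (2 * of_int q + 1) * y))
        + \<i> * (of_int p * (of_real pi * 2))"
    by (simp add: algebra_simps power2_eq_square)
  then show ?thesis
    unfolding theta_term_def theta00_term_def theta10_term_def exp_add[symmetric] by (simp only: exp_plus_2pin)
qed

lemma theta_term_mult_even:
  "theta_term \<tau> (x + y) (p + q) * theta_term \<tau> (x - y) (p - q) = - (theta10_term \<tau> x p * theta00_term \<tau> y q)"
proof -
  have "pi * \<i> * \<tau> * (of_int (p + q) + 1/2)^2 + 2 * pi * \<i> * (of_int (p + q) + 1/2) * ((x + y) + 1/2)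
      + (pi * \<i> * \<tau> * (of_int (p - q) + 1/2)^2 + 2 * pi * \<i> * (of_int (p - q) + 1/2) * ((x - y) + 1/2))
      = ((2 * pi * \<i> * (\<tau> * (2 * of_int p + 1)^2 / 4 + (2 * of_int p + 1) * x)
          + 2 * pi * \<i> * (\<tau> * (of_int q)^2 + 2 * of_int q * y)) + \<i> * pi)
        + \<i> * (of_int p * (of_real pi * 2))"
    by (simp add: algebra_simps power2_eq_square)
  then have "theta_term \<tau> (x + y) (p + q) * theta_term \<tau> (x - y) (p - q)
      = exp ((2 * pi * \<i> * (\<tau> * (2 * of_int p + 1)^2 / 4 + (2 * of_int p + 1) * x)
          + 2 * pi * \<i> * (\<tau> * (of_int q)^2 + 2 * of_int q * y)) + \<i> * pi)"
    unfolding theta_term_def exp_add[symmetric] by (simp only: exp_plus_2pin)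
  then show ?thesis
    unfolding theta00_term_def theta10_term_def by (simp add: exp_add)
qed

text \<open>The pairs \<open>(j, k)\<close> with \<open>j + k\<close> odd resp. even are exactly \<open>(p + q, p - q - 1)\<close> resp.
  \<open>(p + q, p - q)\<close>, and on each family the product of the two theta series factorizes.\<close>
lemma theta_fn_add_mult_diff:
  assumes "Im \<tau> > 0"
  shows "theta_fn \<tau> (x + y) * theta_fn \<tau> (x - y) =
     (\<Sum>\<^sub>\<infinity>p. theta00_term \<tau> x p) * (\<Sum>\<^sub>\<infinity>q. theta10_term \<tau> y q)
   - (\<Sum>\<^sub>\<infinity>p. theta10_term \<tau> x p) * (\<Sum>\<^sub>\<infinity>q. theta00_term \<tau> y q)"
proof -
  define F where "F = (\<lambda>(j, k). theta_term \<tau> (x + y) j * theta_term \<tau> (x - y) k)"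
  define odd_pair where "odd_pair = (\<lambda>(p::int, q::int). (p + q, p - q - 1))"
  define even_pair where "even_pair = (\<lambda>(p::int, q::int). (p + q, p - q))"
  note summable = theta_term_summable[OF assms] theta00_term_summable[OF assms] theta10_term_summable[OF assms]
  have "\<exists>p q. (j, k) = odd_pair (p, q) \<or> (j, k) = even_pair (p, q)" for j k :: int
  proof -
    have "\<exists>p q. (j = p + q \<and> k = p - q - 1) \<or> (j = p + q \<and> k = p - q)" by presburger
    then show ?thesis unfolding odd_pair_def even_pair_def by auto
  qed
  then have cover: "UNIV = range odd_pair \<union> range even_pair" by fast
  have disjoint: "range odd_pair \<inter> range even_pair = {}"
  proof -
    have "\<not> (p + q = p' + q' \<and> p - q - 1 = p' - q')" for p q p' q' :: int by presburger
    then show ?thesis unfolding odd_pair_def even_pair_def by auto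
  qed
  have inj: "inj odd_pair" "inj even_pair"
    unfolding odd_pair_def even_pair_def inj_def by auto
  have "F summable_on UNIV"
    unfolding F_def using summable_on_times[OF summable(1) summable(1)] by simp
  have "theta_fn \<tau> (x + y) * theta_fn \<tau> (x - y) = infsum F UNIV"
    unfolding theta_fn_eq_infsum F_def using infsum_times_infsum[OF summable(1) summable(1)] by simp
  also have "\<dots> = infsum F (range odd_pair \<union> range even_pair)"
    by (simp only: cover[symmetric])
  also have "\<dots> = infsum F (range odd_pair) + infsum F (range even_pair)"
    using \<open>F summable_on UNIV\<close> disjoint by (intro infsum_Un_disjoint) (auto intro: summable_on_subset_banach)
  also have "infsum F (range odd_pair) = (\<Sum>\<^sub>\<infinity>(p, q). theta00_term \<tau> x p * theta10_term \<tau> y q)"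
    unfolding infsum_reindex[OF inj(1)] by (rule infsum_cong) (auto simp: F_def odd_pair_def theta_term_mult_odd)
  also have "\<dots> = (\<Sum>\<^sub>\<infinity>p. theta00_term \<tau> x p) * (\<Sum>\<^sub>\<infinity>q. theta10_term \<tau> y q)"
    using infsum_times_infsum[OF summable(2) summable(3)] by simp
  also have "infsum F (range even_pair) = - (\<Sum>\<^sub>\<infinity>(p, q). theta10_term \<tau> x p * theta00_term \<tau> y q)"
    unfolding infsum_reindex[OF inj(2)] infsum_uminus[symmetric]
    by (rule infsum_cong) (auto simp: F_def even_pair_def theta_term_mult_even)
  also have "(\<Sum>\<^sub>\<infinity>(p, q). theta10_term \<tau> x p * theta00_term \<tau> y q)
      = (\<Sum>\<^sub>\<infinity>p. theta10_term \<tau> x p) * (\<Sum>\<^sub>\<infinity>q. theta00_term \<tau> y q)"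
    using infsum_times_infsum[OF summable(3) summable(2)] by simp
  finally show ?thesis by simp
qed

lemma sin_fn_minus: "sin_fn (- x) = - sin_fn x"
  by (simp add: sin_fn_def)

lemma sin_fn_add_mult_diff: "sin_fn (x + y) * sin_fn (x - y) = (sin_fn x)^2 - (sin_fn y)^2"
proof -
  define a where "a = of_real pi * x"
  define b where "b = of_real pi * y"
  have "sin_fn (x + y) = sin (a + b)" "sin_fn (x - y) = sin (a - b)" "sin_fn x = sin a" "sin_fn y = sin b"
    unfolding sin_fn_def a_def b_def by (simp_all add: distrib_left right_diff_distrib)
  moreover have "sin a ^ 2 + cos a ^ 2 = 1" "sin b ^ 2 + cos b ^ 2 = 1"
    by (simp_all add: sin_cos_squared_add)
  ultimately show ?thesis
    unfolding sin_add sin_diff by algebra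
qed

lemma theta_or_sin_odd_with_addition_formula:
  assumes "Im \<tau> > 0" and "f = theta_fn \<tau> \<or> f = sin_fn"
  obtains \<alpha> \<beta> where "\<And>x. f (- x) = - f x" and "\<And>x y. f (x + y) * f (x - y) = \<alpha> x * \<beta> y - \<beta> x * \<alpha> y"
  using assms(2)
proof
  assume "f = theta_fn \<tau>"
  then show ?thesis
    using that[of "\<lambda>x. \<Sum>\<^sub>\<infinity>p. theta00_term \<tau> x p" "\<lambda>x. \<Sum>\<^sub>\<infinity>p. theta10_term \<tau> x p"]
    by (simp add: theta_fn_minus theta_fn_add_mult_diff[OF assms(1)])
next
  assume "f = sin_fn"
  then show ?thesis
    using that[of "\<lambda>x. (sin_fn x)^2" "\<lambda>_. 1"] by (simp add: sin_fn_minus sin_fn_add_mult_diff)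
qed

theorem lemma4p2:
  fixes f :: "complex \<Rightarrow> complex" and \<eta> \<tau> \<Lambda> v lam :: complex
    and J i1 j1 i2 j2 :: nat and K :: "int list"
  assumes tau: "Im \<tau> > 0"
    and f_choice: "f = theta_fn \<tau> \<or> f = sin_fn"
    and generic_eta: "f (2 * \<eta>) \<noteq> 0"
    and generic_v: "\<forall>m::int. f (\<eta> * \<Lambda> - v - 2 * \<eta> * of_int m) \<noteq> 0"
    and generic_lambda: "\<forall>m::int. f (lam + 2 * \<eta> * of_int m) \<noteq> 0"
    and J_pos: "J > 0"
    and j2_le: "j2 \<le> J"
    and K: "K \<in> bits J (int j2)"
  shows "WfusedK f \<eta> \<Lambda> J (int i1) (int j1) (int i2) K v lam =
    (\<Sum>k=0..J.
       Wfused f \<eta> \<Lambda> j2 (int i1) (int k) (int i1 + int k - int j2) (int j2) v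
          (lam - 2 * \<eta> * (of_nat J - 2 * of_nat j1 - of_nat j2 + 2 * of_nat k))
     * Wfused f \<eta> \<Lambda> (J - j2) (int i1 + int k - int j2) (int j1 - int k) (int i2) 0
          (v + 2 * \<eta> * of_nat j2) lam)"
proof -
  obtain \<alpha> \<beta> where "\<And>x. f (- x) = - f x" and "\<And>x y. f (x + y) * f (x - y) = \<alpha> x * \<beta> y - \<beta> x * \<alpha> y"
    using theta_or_sin_odd_with_addition_formula[OF tau f_choice] by blast
  with generic_eta interpret exchange_weights f \<eta> \<Lambda> \<alpha> \<beta>
    by unfold_locales
  have "regular_spectral v" "regular_dynamical lam"
    using generic_v generic_lambda by (simp_all add: regular_spectral_def regular_dynamical_def)
  then show ?thesis
    using fused_weight_factorization j2_le K by blast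
qed

end
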